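(* For integers $a,b,c,d$ with $1\le c<a$, $0\le d<b$, and $a+b+c+d=n$, let $\lambda_{a,b,c,d} = a\,(c+1)\,2^d\,1^{b-d-1}\in P(n)$ (the partition with parts $a$, $c+1$, then $d$ parts equal to $2$, then $b-d-1$ parts equal to $1$). Then the number of standard Young tableaux of shape $\lambda_{a,b,c,d}$ is $$\chi^{\lambda_{a,b,c,d}}(1^n) = \binom{n}{a,b,c,d}\frac{ac(a-c)(b-d)}{(a+b)(a+d)(b+c)(c+d)},$$ and $$\rho_{\lambda_{a,b,c,d}} = \binom{a}{2}-\binom{b+1}{2}+\binom{c}{2}-\binom{d+1}{2},$$ where $2\rho_\lambda=\sum_i\lambda_i(\lambda_i-2i+1)$.
   Context: $\binom{n}{a,b,c,d} = \frac{n!}{a!\,b!\,c!\,d!}$ is the multinomial coefficient. *)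

theory Defs
  imports Main "HOL.Real"
begin

text \<open>Partitions are represented as weakly decreasing lists of positive naturals,
  parts listed as lambda_1 >= lambda_2 >= ... (list index i corresponds to row i+1).\<close>

definition young_diagram :: "nat list \<Rightarrow> (nat \<times> nat) set" where
  "young_diagram lam = {(i, j). i < length lam \<and> j < lam ! i}"

text \<open>Standard Young tableaux of shape lam: bijective fillings of the cells with
  1..|lam|, strictly increasing along rows and down columns (zero outside the diagram,
  so that each tableau is a unique function).\<close>

definition syt :: "nat list \<Rightarrow> ((nat \<times> nat) \<Rightarrow> nat) set" where
  "syt lam = {T. bij_betw T (young_diagram lam) {1..sum_list lam}
      \<and> (\<forall>x. x \<notin> young_diagram lam \<longrightarrow> T x = 0)
      \<and> (\<forall>i j. (i, Suc j) \<in> young_diagram lam \<longrightarrow> T (i, j) < T (i, Suc j))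
      \<and> (\<forall>i j. (Suc i, j) \<in> young_diagram lam \<longrightarrow> T (i, j) < T (Suc i, j))}"

definition num_syt :: "nat list \<Rightarrow> nat" where
  "num_syt lam = card (syt lam)"

definition rho :: "nat list \<Rightarrow> real" where
  "rho lam = (\<Sum>i<length lam. real (lam ! i) * (real (lam ! i) - 2 * real (i + 1) + 1)) / 2"

definition lam_abcd :: "nat \<Rightarrow> nat \<Rightarrow> nat \<Rightarrow> nat \<Rightarrow> nat list" where
  "lam_abcd a b c d = [a, c + 1] @ replicate d 2 @ replicate (b - d - 1) 1"

end

theory Submission
  imports Defs Complex_Main
begin

text \<open>The largest entry of a standard tableau sits in a corner, and deleting it gives the
  branching rule: the number of standard tableaux of a shape is the sum, over its corners,
  of the number for the shape with that corner removed. The corners of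
  a (c+1) 2^d 1^(b-d-1) decrease exactly one of a, c, d, b, so the count obeys a four-term
  recurrence. The closed formula obeys the same recurrence, by a rational-function identity,
  and it vanishes where a branch is missing (a = c or b = d); the one exception is the
  corner of the second row when c = 1, d = 0, which leads to a hook a 1^b counted by a
  binomial coefficient.\<close>

section \<open>Removing corners of a Young diagram\<close>

definition shrink_row :: "nat list \<Rightarrow> nat \<Rightarrow> nat list" where
  "shrink_row lam i = lam[i := lam ! i - 1]"

definition is_corner :: "nat list \<Rightarrow> nat \<Rightarrow> bool" where
  "is_corner lam i \<longleftrightarrow>
     i < length lam \<and> 0 < lam ! i \<and> (Suc i < length lam \<longrightarrow> lam ! Suc i < lam ! i)"

abbreviation corner_cell :: "nat list \<Rightarrow> nat \<Rightarrow> nat \<times> nat" where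
  "corner_cell lam i \<equiv> (i, lam ! i - 1)"

lemma young_diagram_shrink_row:
  "i < length lam \<Longrightarrow> 0 < lam ! i \<Longrightarrow>
   young_diagram (shrink_row lam i) = young_diagram lam - {corner_cell lam i}"
  by (auto simp: young_diagram_def shrink_row_def nth_list_update split: if_splits)

lemma sum_list_shrink_row:
  "i < length lam \<Longrightarrow> 0 < lam ! i \<Longrightarrow> sum_list (shrink_row lam i) = sum_list lam - 1"
  unfolding shrink_row_def using sum_list_update[of i lam] elem_le_sum_list[of i lam] by simp

lemma finite_young_diagram: "finite (young_diagram lam)"
proof -
  have "young_diagram lam = Sigma {..<length lam} (\<lambda>i. {..<lam ! i})"
    by (auto simp: young_diagram_def)
  then show ?thesis by simp
qed

lemma finite_syt: "finite (syt lam)"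
proof -
  have "syt lam \<subseteq> {T. \<forall>x. (x \<in> young_diagram lam \<longrightarrow> T x \<in> {1..sum_list lam}) \<and>
                         (x \<notin> young_diagram lam \<longrightarrow> T x = 0)}"
    by (auto simp: syt_def bij_betw_def)
  moreover have "finite \<dots>"
    by (rule finite_set_of_finite_funs) (auto simp: finite_young_diagram)
  ultimately show ?thesis by (rule finite_subset)
qed

lemma sytD:
  assumes "T \<in> syt lam"
  shows syt_bij: "bij_betw T (young_diagram lam) {1..sum_list lam}"
    and syt_outside: "x \<notin> young_diagram lam \<Longrightarrow> T x = 0"
    and syt_row: "(i, Suc j) \<in> young_diagram lam \<Longrightarrow> T (i, j) < T (i, Suc j)"
    and syt_col: "(Suc i, j) \<in> young_diagram lam \<Longrightarrow> T (i, j) < T (Suc i, j)"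
  using assms unfolding syt_def by (cases x; auto)+

lemma syt_le_sum_list:
  assumes "T \<in> syt lam" shows "T x \<le> sum_list lam"
proof (cases "x \<in> young_diagram lam")
  case True
  then have "T x \<in> {1..sum_list lam}" using syt_bij[OF assms] by (auto simp: bij_betw_def)
  then show ?thesis by simp
qed (simp add: syt_outside[OF assms])

lemma syt_max_entry_in_corner:
  assumes T: "T \<in> syt lam" and pos: "0 < sum_list lam"
  obtains i where "is_corner lam i" "T (corner_cell lam i) = sum_list lam"
proof -
  let ?n = "sum_list lam"
  have "?n \<in> T ` young_diagram lam" using syt_bij[OF T] pos by (auto simp: bij_betw_def)
  then obtain i j where ij: "i < length lam" "j < lam ! i" "T (i, j) = ?n"
    by (auto simp: young_diagram_def)
  have "j = lam ! i - 1"
  proof (rule ccontr)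
    assume "j \<noteq> lam ! i - 1"
    then have "(i, Suc j) \<in> young_diagram lam" using ij by (simp add: young_diagram_def)
    then have "T (i, j) < T (i, Suc j)" by (rule syt_row[OF T])
    then show False using ij syt_le_sum_list[OF T, of "(i, Suc j)"] by simp
  qed
  moreover have "lam ! Suc i < lam ! i" if "Suc i < length lam"
  proof (rule ccontr)
    assume "\<not> lam ! Suc i < lam ! i"
    then have "(Suc i, j) \<in> young_diagram lam" using ij that by (simp add: young_diagram_def)
    then have "T (i, j) < T (Suc i, j)" by (rule syt_col[OF T])
    then show False using ij syt_le_sum_list[OF T, of "(Suc i, j)"] by simp
  qed
  ultimately show thesis using ij by (intro that[of i]) (auto simp: is_corner_def)
qed

lemma syt_delete_max:
  assumes T: "T \<in> syt lam" and corner: "is_corner lam i"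
    and max: "T (corner_cell lam i) = sum_list lam"
  shows "T(corner_cell lam i := 0) \<in> syt (shrink_row lam i)"
proof -
  let ?x = "corner_cell lam i" and ?n = "sum_list lam" and ?D = "young_diagram lam"
  have i: "i < length lam" "0 < lam ! i" using corner by (auto simp: is_corner_def)
  then have "0 < ?n" using elem_le_sum_list[of i lam] by linarith
  have "bij_betw T (?D - {?x}) ({1..?n} - {?n})"
    using syt_bij[OF T] max i \<open>0 < ?n\<close> by (intro bij_betw_DiffI) (auto simp: young_diagram_def)
  moreover have "{1..?n} - {?n} = {1..?n - 1}" by auto
  ultimately have "bij_betw T (?D - {?x}) {1..?n - 1}" by simp
  then have "bij_betw (T(?x := 0)) (?D - {?x}) {1..?n - 1}"
    by (rule bij_betw_cong[THEN iffD1, rotated]) auto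
  moreover have "(T(?x := 0)) (i', j) < (T(?x := 0)) (i', Suc j)"
    if "(i', Suc j) \<in> ?D - {?x}" for i' j
  proof -
    have "(i', j) \<noteq> ?x" using that by (auto simp: young_diagram_def)
    moreover have "T (i', j) < T (i', Suc j)" using syt_row[OF T] that by simp
    ultimately show ?thesis using that by (metis DiffE fun_upd_other singletonI)
  qed
  moreover have "(T(?x := 0)) (i', j) < (T(?x := 0)) (Suc i', j)"
    if "(Suc i', j) \<in> ?D - {?x}" for i' j
  proof -
    have "(i', j) \<noteq> ?x" using that corner by (auto simp: young_diagram_def is_corner_def)
    moreover have "T (i', j) < T (Suc i', j)" using syt_col[OF T] that by simp
    ultimately show ?thesis using that by (metis DiffE fun_upd_other singletonI)
  qed
  moreover have "(T(?x := 0)) y = 0" if "y \<notin> ?D - {?x}" for y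
    using syt_outside[OF T, of y] that by (cases "y = ?x") auto
  moreover have "young_diagram (shrink_row lam i) = ?D - {?x}"
    and "sum_list (shrink_row lam i) = ?n - 1"
    using i by (simp_all add: young_diagram_shrink_row sum_list_shrink_row)
  ultimately show ?thesis unfolding syt_def mem_Collect_eq by simp
qed

lemma syt_insert_max:
  assumes T: "T \<in> syt (shrink_row lam i)" and corner: "is_corner lam i"
  shows "T(corner_cell lam i := sum_list lam) \<in> syt lam"
proof -
  let ?x = "corner_cell lam i" and ?n = "sum_list lam" and ?D = "young_diagram lam"
  let ?T = "T(?x := ?n)"
  have i: "i < length lam" "0 < lam ! i" using corner by (auto simp: is_corner_def)
  have x: "?x \<in> ?D" using i by (simp add: young_diagram_def)
  have D: "young_diagram (shrink_row lam i) = ?D - {?x}"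
    and n: "sum_list (shrink_row lam i) = ?n - 1"
    using i by (simp_all add: young_diagram_shrink_row sum_list_shrink_row)
  have pos: "0 < ?n" using i elem_le_sum_list[of i lam] by linarith
  have small: "T y < ?n" for y
    using syt_le_sum_list[OF T, of y] n pos by linarith
  have row: "T (i', j) < T (i', Suc j)" if "(i', Suc j) \<in> ?D - {?x}" for i' j
    using syt_row[OF T] that unfolding D by blast
  have col: "T (i', j) < T (Suc i', j)" if "(Suc i', j) \<in> ?D - {?x}" for i' j
    using syt_col[OF T] that unfolding D by blast
  have "bij_betw T (?D - {?x}) {1..?n - 1}" using syt_bij[OF T] unfolding D n .
  then have "bij_betw ?T (?D - {?x}) {1..?n - 1}"
    by (rule bij_betw_cong[THEN iffD1, rotated]) auto
  then have "bij_betw ?T ((?D - {?x}) \<union> {?x}) ({1..?n - 1} \<union> {?T ?x})"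
    by (rule notIn_Un_bij_betw3[THEN iffD1, rotated 2]) auto
  moreover have "(?D - {?x}) \<union> {?x} = ?D" "{1..?n - 1} \<union> {?T ?x} = {1..?n}"
    using x pos by auto
  ultimately have "bij_betw ?T ?D {1..?n}" by simp
  moreover have "?T (i', j) < ?T (i', Suc j)" if "(i', Suc j) \<in> ?D" for i' j
  proof (cases "(i', Suc j) = ?x")
    case False
    moreover have "(i', j) \<noteq> ?x" using that by (auto simp: young_diagram_def)
    ultimately show ?thesis using row[of i' j] that by (metis DiffI fun_upd_other singletonD)
  qed (use small in auto)
  moreover have "?T (i', j) < ?T (Suc i', j)" if "(Suc i', j) \<in> ?D" for i' j
  proof (cases "(Suc i', j) = ?x")
    case False
    moreover have "(i', j) \<noteq> ?x"
      using that corner by (auto simp: young_diagram_def is_corner_def)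
    ultimately show ?thesis using col[of i' j] that by (metis DiffI fun_upd_other singletonD)
  qed (use small in auto)
  moreover have "?T y = 0" if "y \<notin> ?D" for y
  proof -
    have "y \<notin> young_diagram (shrink_row lam i)" using that D by simp
    then show ?thesis using syt_outside[OF T] that x by auto
  qed
  ultimately show ?thesis unfolding syt_def by blast
qed

lemma syt_decomposition:
  assumes "0 < sum_list lam"
  shows "syt lam = (\<Union>i\<in>{i. is_corner lam i}.
           (\<lambda>T. T(corner_cell lam i := sum_list lam)) ` syt (shrink_row lam i))"
proof (intro equalityI subsetI)
  fix T assume T: "T \<in> syt lam"
  then obtain i where i: "is_corner lam i" "T (corner_cell lam i) = sum_list lam"
    using syt_max_entry_in_corner assms by blast
  then have "T = (T(corner_cell lam i := 0))(corner_cell lam i := sum_list lam)"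
    by (metis fun_upd_idem fun_upd_upd)
  moreover have "T(corner_cell lam i := 0) \<in> syt (shrink_row lam i)"
    using syt_delete_max T i by blast
  ultimately show "T \<in> (\<Union>i\<in>{i. is_corner lam i}.
           (\<lambda>T. T(corner_cell lam i := sum_list lam)) ` syt (shrink_row lam i))"
    using i by blast
qed (use syt_insert_max in blast)

lemma num_syt_branching:
  assumes pos: "0 < sum_list lam"
  shows "num_syt lam = (\<Sum>i | is_corner lam i. num_syt (shrink_row lam i))"
proof -
  let ?ins = "\<lambda>i T. T(corner_cell lam i := sum_list lam)"
  have "finite {i. is_corner lam i}"
    by (rule finite_subset[of _ "{..<length lam}"]) (auto simp: is_corner_def)
  moreover have "inj_on (?ins i) (syt (shrink_row lam i))" if "is_corner lam i" for i
  proof (rule inj_onI)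
    fix T1 T2
    assume T: "T1 \<in> syt (shrink_row lam i)" "T2 \<in> syt (shrink_row lam i)"
      and eq: "?ins i T1 = ?ins i T2"
    have "corner_cell lam i \<notin> young_diagram (shrink_row lam i)"
      using that by (simp add: young_diagram_shrink_row is_corner_def)
    then have "T1 (corner_cell lam i) = T2 (corner_cell lam i)"
      using syt_outside[OF T(1)] syt_outside[OF T(2)] by simp
    with eq show "T1 = T2" by (metis fun_upd_idem fun_upd_upd)
  qed
  moreover have "?ins i ` syt (shrink_row lam i) \<inter> ?ins k ` syt (shrink_row lam k) = {}"
    if "is_corner lam i" "is_corner lam k" "i \<noteq> k" for i k
  proof -
    have "T (corner_cell lam k) < sum_list lam" if "T \<in> syt (shrink_row lam i)" for T
    proof -
      have "T (corner_cell lam k) \<le> sum_list (shrink_row lam i)" by (rule syt_le_sum_list[OF that])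
      then show ?thesis
        using \<open>is_corner lam i\<close> pos by (simp add: sum_list_shrink_row is_corner_def)
    qed
    moreover have "?ins i T1 (corner_cell lam k) = T1 (corner_cell lam k)" for T1
      using \<open>i \<noteq> k\<close> by simp
    ultimately have "?ins i T1 \<noteq> ?ins k T2" if "T1 \<in> syt (shrink_row lam i)" for T1 T2
      using that by (metis fun_upd_same less_irrefl)
    then show ?thesis by blast
  qed
  ultimately have "card (syt lam) = (\<Sum>i | is_corner lam i. card (?ins i ` syt (shrink_row lam i)))"
    unfolding syt_decomposition[OF pos] by (intro card_UN_disjoint) (auto simp: finite_syt)
  also have "\<dots> = (\<Sum>i | is_corner lam i. card (syt (shrink_row lam i)))"
    using \<open>\<And>i. is_corner lam i \<Longrightarrow> inj_on _ _\<close> by (intro sum.cong) (auto intro: card_image)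
  finally show ?thesis unfolding num_syt_def .
qed

lemma num_syt_append_zero: "num_syt (lam @ [0]) = num_syt lam"
proof -
  have "young_diagram (lam @ [0]) = young_diagram lam"
    by (auto simp: young_diagram_def nth_append split: if_splits)
  then show ?thesis by (simp add: num_syt_def syt_def)
qed

lemma num_syt_Nil: "num_syt [] = 1"
proof -
  have "syt [] = {\<lambda>_. 0}" by (auto simp: syt_def young_diagram_def bij_betw_def)
  then show ?thesis by (simp add: num_syt_def)
qed

lemma corners_hook:
  "1 \<le> a \<Longrightarrow> {i. is_corner (a # replicate b 1) i} =
     (if 1 < a \<or> b = 0 then {0} else {}) \<union> (if 0 < b then {b} else {})"
  by (auto simp: is_corner_def nth_Cons' split: if_splits)

lemma num_syt_hook: "1 \<le> a \<Longrightarrow> num_syt (a # replicate b 1) = (a - 1 + b) choose b"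
proof (induction "a + b" arbitrary: a b rule: less_induct)
  case less
  let ?lam = "a # replicate b (1::nat)"
  have pos: "0 < sum_list ?lam" using less.prems by simp
  have first: "num_syt (shrink_row ?lam 0) = (a - 2 + b) choose b" if "1 < a \<or> b = 0"
  proof (cases "1 < a")
    case True
    then show ?thesis using less.hyps[of "a - 1" b] by (simp add: shrink_row_def numeral_2_eq_2)
  next
    case False
    then have "shrink_row ?lam 0 = [] @ [0]" using that less.prems by (simp add: shrink_row_def)
    then show ?thesis using False that num_syt_append_zero[of "[]"] by (simp add: num_syt_Nil)
  qed
  have last: "num_syt (shrink_row ?lam b) = (a - 1 + (b - 1)) choose (b - 1)" if "0 < b"
  proof -
    have "shrink_row ?lam b = (a # replicate (b - 1) 1) @ [0]"
      using that by (cases b)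
        (simp_all add: shrink_row_def replicate_append_same[symmetric] list_update_append nth_append)
    then show ?thesis
      using num_syt_append_zero[of "a # replicate (b - 1) 1"] less.hyps[of a "b - 1"] less.prems that
      by simp
  qed
  have "num_syt ?lam = (if 1 < a \<or> b = 0 then num_syt (shrink_row ?lam 0) else 0)
      + (if 0 < b then num_syt (shrink_row ?lam b) else 0)"
    unfolding num_syt_branching[OF pos] corners_hook[OF less.prems]
    by (simp add: sum.union_disjoint)
  also have "\<dots> = (a - 1 + b) choose b"
  proof (cases b)
    case (Suc b')
    show ?thesis
    proof (cases "1 < a")
      case True
      then obtain a' where "a = Suc (Suc a')" by (cases a; cases "a - 1") simp_all
      then show ?thesis using first last Suc by simp
    qed (use last Suc less.prems in simp)
  next
    case 0
    then show ?thesis using first by simp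
  qed
  finally show ?case .
qed

section \<open>The shapes a (c+1) 2^d 1^(b-d-1)\<close>

lemma length_lam_abcd: "d < b \<Longrightarrow> length (lam_abcd a b c d) = b + 1"
  by (simp add: lam_abcd_def)

lemma nth_lam_abcd:
  "d < b \<Longrightarrow> i \<le> b \<Longrightarrow> lam_abcd a b c d ! i =
     (if i = 0 then a else if i = 1 then c + 1 else if i \<le> d + 1 then 2 else 1)"
  by (cases i; cases "i - 1") (auto simp: lam_abcd_def nth_append)

lemma lam_abcd_hook: "0 < b \<Longrightarrow> lam_abcd a b 0 0 = a # replicate b 1"
  by (cases b) (simp_all add: lam_abcd_def)

lemma corners_lam_abcd:
  assumes "1 \<le> c" "c < a" "d < b"
  shows "{i. is_corner (lam_abcd a b c d) i} =
           (if c + 1 < a then {0} else {}) \<union> (if d = 0 \<or> 2 \<le> c then {1} else {})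
           \<union> (if 0 < d then {d + 1} else {}) \<union> (if d + 1 < b then {b} else {})"
  using assms unfolding is_corner_def length_lam_abcd[OF assms(3)]
  by (auto simp: nth_lam_abcd split: if_splits)

lemma shrink_row_lam_abcd:
  assumes "d < b"
  shows "shrink_row (lam_abcd a b c d) 0 = lam_abcd (a - 1) b c d"
    and "1 \<le> c \<Longrightarrow> shrink_row (lam_abcd a b c d) 1 = lam_abcd a b (c - 1) d"
    and "0 < d \<Longrightarrow> shrink_row (lam_abcd a b c d) (d + 1) = lam_abcd a b c (d - 1)"
    and "d + 1 < b \<Longrightarrow> shrink_row (lam_abcd a b c d) b = lam_abcd a (b - 1) c d @ [0]"
  using assms
  by (auto intro!: nth_equalityI
      simp: shrink_row_def length_lam_abcd nth_lam_abcd nth_list_update nth_append)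

lemma num_syt_lam_abcd_branching:
  assumes "1 \<le> c" "c < a" "d < b"
  shows "num_syt (lam_abcd a b c d) =
    (if c + 1 < a then num_syt (lam_abcd (a - 1) b c d) else 0) +
    (if d = 0 \<or> 2 \<le> c then num_syt (lam_abcd a b (c - 1) d) else 0) +
    (if 0 < d then num_syt (lam_abcd a b c (d - 1)) else 0) +
    (if d + 1 < b then num_syt (lam_abcd a (b - 1) c d) else 0)"
proof -
  have "0 < sum_list (lam_abcd a b c d)" using assms by (simp add: lam_abcd_def)
  then show ?thesis
    using assms unfolding num_syt_branching[OF \<open>0 < _\<close>] corners_lam_abcd[OF assms]
    by (simp add: sum.union_disjoint shrink_row_lam_abcd[simplified] num_syt_append_zero)
qed

section \<open>The closed formula\<close>

definition multinomial4 :: "nat \<Rightarrow> nat \<Rightarrow> nat \<Rightarrow> nat \<Rightarrow> real" where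
  "multinomial4 a b c d = fact (a + b + c + d) / (fact a * fact b * fact c * fact d)"

lemma fact_pred_quotient:
  assumes "0 < k" "0 < n"
  shows "(fact (n - 1) / (fact (k - 1) * q) :: real) = fact n / (fact k * q) * (real k / real n)"
  using assms by (cases "q = 0") (simp_all add: fact_reduce[of n] fact_reduce[of k] field_simps)

lemma multinomial4_pred_first:
  assumes "0 < k"
  shows "multinomial4 (k - 1) b c d = multinomial4 k b c d * (real k / real (k + b + c + d))"
proof -
  have "k - 1 + b + c + d = (k + b + c + d) - 1" using assms by simp
  then show ?thesis unfolding multinomial4_def mult.assoc
    using fact_pred_quotient[OF assms, of "k + b + c + d"] assms by simp
qed

lemma multinomial4_pred:
  fixes a b c d :: nat
  defines "n \<equiv> real (a + b + c + d)"
  shows "0 < a \<Longrightarrow> multinomial4 (a - 1) b c d = multinomial4 a b c d * (a / n)"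
    and "0 < b \<Longrightarrow> multinomial4 a (b - 1) c d = multinomial4 a b c d * (b / n)"
    and "0 < c \<Longrightarrow> multinomial4 a b (c - 1) d = multinomial4 a b c d * (c / n)"
    and "0 < d \<Longrightarrow> multinomial4 a b c (d - 1) = multinomial4 a b c d * (d / n)"
  using multinomial4_pred_first[of a b c d] multinomial4_pred_first[of b a c d]
    multinomial4_pred_first[of c b a d] multinomial4_pred_first[of d b c a]
  unfolding n_def multinomial4_def by (simp_all add: ac_simps)

definition syt_ratio :: "real \<Rightarrow> real \<Rightarrow> real \<Rightarrow> real \<Rightarrow> real" where
  "syt_ratio x y z w = x * z * (x - z) * (y - w) / ((x + y) * (x + w) * (y + z) * (z + w))"

definition syt_formula :: "nat \<Rightarrow> nat \<Rightarrow> nat \<Rightarrow> nat \<Rightarrow> real" where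
  "syt_formula a b c d = multinomial4 a b c d * syt_ratio a b c d"

lemma syt_ratio_recurrence:
  fixes x y z w :: real
  assumes "x + y \<noteq> 0" "x + w \<noteq> 0" "y + z \<noteq> 0" "z + w \<noteq> 0"
    and "x + y \<noteq> 1" "x + w \<noteq> 1" "y + z \<noteq> 1" "z + w \<noteq> 1"
  shows "(x + y + z + w) * syt_ratio x y z w =
           x * syt_ratio (x - 1) y z w + y * syt_ratio x (y - 1) z w
         + z * syt_ratio x y (z - 1) w + w * syt_ratio x y z (w - 1)"
proof -
  have shifted: "syt_ratio (x - 1) y z w = (x-1)*z*(x-1-z)*(y-w) / ((x+y-1)*(x+w-1)*(y+z)*(z+w))"
    "syt_ratio x (y - 1) z w = x*z*(x-z)*(y-1-w) / ((x+y-1)*(x+w)*(y+z-1)*(z+w))"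
    "syt_ratio x y (z - 1) w = x*(z-1)*(x-(z-1))*(y-w) / ((x+y)*(x+w)*(y+z-1)*(z+w-1))"
    "syt_ratio x y z (w - 1) = x*z*(x-z)*(y-(w-1)) / ((x+y)*(x+w-1)*(y+z)*(z+w-1))"
    unfolding syt_ratio_def by (simp_all add: algebra_simps)
  show ?thesis
    unfolding shifted unfolding syt_ratio_def by (simp add: divide_simps assms) algebra
qed

lemma syt_ratio_recurrence_hook:
  fixes x y :: real
  assumes "x \<noteq> 0" "y \<noteq> 0" "x \<noteq> 1" "y \<noteq> -1" "x + y \<noteq> 0" "x + y \<noteq> 1"
  shows "(x + y + 1) * syt_ratio x y 1 0 =
           x * syt_ratio (x - 1) y 1 0 + y * syt_ratio x (y - 1) 1 0 + x / (x + y)"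
proof -
  have shifted: "syt_ratio (x - 1) y 1 0 = (x-1)*(x-2)*y / ((x+y-1)*(x-1)*(y+1))"
    "syt_ratio x (y - 1) 1 0 = x*(x-1)*(y-1) / ((x+y-1)*x*y)"
    unfolding syt_ratio_def by (simp_all add: algebra_simps)
  have "y + 1 \<noteq> 0" using assms by (simp add: add_eq_0_iff)
  then show ?thesis
    unfolding shifted unfolding syt_ratio_def by (simp add: divide_simps assms) algebra
qed

lemma multinomial4_binomial: "multinomial4 a b 0 0 = real ((a + b) choose b)"
  by (simp add: multinomial4_def binomial_fact)

lemma syt_formula_eq_zero: "a = c \<or> c = 0 \<or> b = d \<Longrightarrow> syt_formula a b c d = 0"
  by (auto simp: syt_formula_def syt_ratio_def)

lemma syt_formula_pred:
  fixes a b c d :: nat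
  defines "M \<equiv> multinomial4 a b c d" and "n \<equiv> real (a + b + c + d)"
  shows "0 < a \<Longrightarrow> syt_formula (a - 1) b c d = M * (a / n) * syt_ratio (a - 1) b c d"
    and "0 < b \<Longrightarrow> syt_formula a (b - 1) c d = M * (b / n) * syt_ratio a (b - 1) c d"
    and "0 < c \<Longrightarrow> syt_formula a b (c - 1) d = M * (c / n) * syt_ratio a b (c - 1) d"
    and "0 < d \<Longrightarrow> syt_formula a b c (d - 1) = M * (d / n) * syt_ratio a b c (d - 1)"
  using multinomial4_pred[where a = a and b = b and c = c and d = d]
  unfolding M_def n_def syt_formula_def
  by (simp_all add: of_nat_diff)

lemma syt_formula_recurrence:
  assumes "1 \<le> c" "c < a" "d < b" "c \<noteq> 1 \<or> d \<noteq> 0"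
  shows "syt_formula a b c d = syt_formula (a - 1) b c d + syt_formula a (b - 1) c d
           + syt_formula a b (c - 1) d + (if 0 < d then syt_formula a b c (d - 1) else 0)"
proof -
  let ?M = "multinomial4 a b c d" and ?n = "real (a + b + c + d)"
  let ?x = "real a" and ?y = "real b" and ?z = "real c" and ?w = "real d"
  have "c + d \<noteq> 1" using assms by linarith
  then have "real c + real d \<noteq> 1" by (metis of_nat_1 of_nat_add of_nat_eq_iff)
  then have "?n * syt_ratio ?x ?y ?z ?w =
          ?x * syt_ratio (?x - 1) ?y ?z ?w + ?y * syt_ratio ?x (?y - 1) ?z ?w
        + ?z * syt_ratio ?x ?y (?z - 1) ?w + ?w * syt_ratio ?x ?y ?z (?w - 1)"
    using syt_ratio_recurrence[where x = ?x and y = ?y and z = ?z and w = ?w] assms by simp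
  moreover have "?n \<noteq> 0" using assms by simp
  ultimately have "syt_ratio ?x ?y ?z ?w =
          (?x * syt_ratio (?x - 1) ?y ?z ?w + ?y * syt_ratio ?x (?y - 1) ?z ?w
        + ?z * syt_ratio ?x ?y (?z - 1) ?w + ?w * syt_ratio ?x ?y ?z (?w - 1)) / ?n"
    by (simp add: eq_divide_eq mult.commute)
  then have "syt_formula a b c d =
          ?M * (?x / ?n) * syt_ratio (?x - 1) ?y ?z ?w + ?M * (?y / ?n) * syt_ratio ?x (?y - 1) ?z ?w
        + ?M * (?z / ?n) * syt_ratio ?x ?y (?z - 1) ?w + ?M * (?w / ?n) * syt_ratio ?x ?y ?z (?w - 1)"
    unfolding syt_formula_def by (simp add: add_divide_distrib distrib_left)
  then show ?thesis
    using assms syt_formula_pred[where a = a and b = b and c = c and d = d]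
    by (cases "d = 0") simp_all
qed

lemma syt_formula_recurrence_hook:
  assumes "1 < a" "0 < b"
  shows "syt_formula a b 1 0 = syt_formula (a - 1) b 1 0 + syt_formula a (b - 1) 1 0
           + real ((a - 1 + b) choose b)"
proof -
  let ?M = "multinomial4 a b 1 0" and ?n = "real (a + b + 1)"
  let ?x = "real a" and ?y = "real b"
  define h where "h = ?x / (?x + ?y)"
  have "?n * syt_ratio ?x ?y 1 0 =
          ?x * syt_ratio (?x - 1) ?y 1 0 + ?y * syt_ratio ?x (?y - 1) 1 0 + h"
    using syt_ratio_recurrence_hook[of ?x ?y] assms unfolding h_def by (simp add: ac_simps)
  moreover have "?n \<noteq> 0" by simp
  ultimately have "syt_ratio ?x ?y 1 0 =
          (?x * syt_ratio (?x - 1) ?y 1 0 + ?y * syt_ratio ?x (?y - 1) 1 0 + h) / ?n"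
    by (simp add: eq_divide_eq mult.commute)
  then have "syt_formula a b 1 0 = ?M * (?x / ?n) * syt_ratio (?x - 1) ?y 1 0
        + ?M * (?y / ?n) * syt_ratio ?x (?y - 1) 1 0 + ?M * (1 / ?n) * h"
    unfolding syt_formula_def by (simp add: add_divide_distrib distrib_left)
  moreover have "?M * (1 / ?n) * h = real ((a - 1 + b) choose b)"
    using multinomial4_pred(3)[of 1 a b 0] multinomial4_pred(1)[of a b 0 0]
      multinomial4_binomial[of "a - 1" b] assms
    unfolding h_def by (simp add: ac_simps)
  ultimately show ?thesis
    using assms syt_formula_pred[where a = a and b = b and c = 1 and d = 0] by simp
qed

lemma syt_formula_branching:
  assumes "1 \<le> c" "c < a" "d < b"
  shows "syt_formula a b c d = syt_formula (a - 1) b c d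
           + (if c = 1 \<and> d = 0 then real ((a - 1 + b) choose b) else syt_formula a b (c - 1) d)
           + (if 0 < d then syt_formula a b c (d - 1) else 0) + syt_formula a (b - 1) c d"
  using syt_formula_recurrence[OF assms] syt_formula_recurrence_hook[of a b] assms by auto

lemma num_syt_lam_abcd:
  "1 \<le> c \<Longrightarrow> c < a \<Longrightarrow> d < b \<Longrightarrow>
   real (num_syt (lam_abcd a b c d)) = syt_formula a b c d"
proof (induction "a + b + c + d" arbitrary: a b c d rule: less_induct)
  case less
  have a_term: "real (if c + 1 < a then num_syt (lam_abcd (a - 1) b c d) else 0)
      = syt_formula (a - 1) b c d"
  proof (cases "c + 1 < a")
    case False
    then have "a - 1 = c" using less.prems by simp
    then show ?thesis using False syt_formula_eq_zero[of c c b d] by simp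
  qed (use less.hyps[of "a - 1" b c d] less.prems in simp)
  have b_term: "real (if d + 1 < b then num_syt (lam_abcd a (b - 1) c d) else 0)
      = syt_formula a (b - 1) c d"
  proof (cases "d + 1 < b")
    case False
    then have "b - 1 = d" using less.prems by simp
    then show ?thesis using False syt_formula_eq_zero[of a c d d] by simp
  qed (use less.hyps[of a "b - 1" c d] less.prems in simp)
  have d_term: "real (if 0 < d then num_syt (lam_abcd a b c (d - 1)) else 0)
      = (if 0 < d then syt_formula a b c (d - 1) else 0)"
    using less.hyps[of a b c "d - 1"] less.prems by simp
  have c_term: "real (if d = 0 \<or> 2 \<le> c then num_syt (lam_abcd a b (c - 1) d) else 0)
      = (if c = 1 \<and> d = 0 then real ((a - 1 + b) choose b) else syt_formula a b (c - 1) d)"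
  proof (cases "2 \<le> c")
    case False
    then have "c = 1" using less.prems by simp
    then show ?thesis
      using less.prems num_syt_hook[of a b] lam_abcd_hook[of b a] syt_formula_eq_zero[of a 0 b d]
      by auto
  qed (use less.hyps[of a b "c - 1" d] less.prems in simp)
  show ?case
    using num_syt_lam_abcd_branching[OF less.prems] syt_formula_branching[OF less.prems]
      a_term b_term c_term d_term by simp
qed

section \<open>The value of rho\<close>

fun rho_from :: "nat \<Rightarrow> nat list \<Rightarrow> real" where
  "rho_from m [] = 0"
| "rho_from m (x # xs) = real x * (real x - 2 * real (m + 1) + 1) + rho_from (Suc m) xs"

lemma rho_from_eq_sum:
  "rho_from m lam = (\<Sum>i<length lam. real (lam ! i) * (real (lam ! i) - 2 * real (m + i + 1) + 1))"
  by (induction lam arbitrary: m) (simp_all add: sum.lessThan_Suc_shift del: sum.lessThan_Suc)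

lemma rho_eq_rho_from: "rho lam = rho_from 0 lam / 2"
  by (simp add: rho_def rho_from_eq_sum)

lemma rho_from_append: "rho_from m (xs @ ys) = rho_from m xs + rho_from (m + length xs) ys"
  by (induction xs arbitrary: m) simp_all

lemma rho_from_replicate:
  "rho_from m (replicate k v) = real k * real v * (real v - 2 * real m - real k)"
proof (induction k arbitrary: m)
  case (Suc k)
  have "rho_from (Suc m) (replicate k v) = real k * real v * (real v - 2 * real (Suc m) - real k)"
    by (rule Suc.IH)
  then show ?case by (simp add: algebra_simps)
qed simp

lemma real_choose_two: "real (n choose 2) = real n * (real n - 1) / 2"
  by (induction n) (simp_all add: numeral_2_eq_2 field_simps)

lemma rho_lam_abcd:
  assumes "d < b"
  shows "rho (lam_abcd a b c d) =
           real (a choose 2) - real ((b + 1) choose 2) + real (c choose 2) - real ((d + 1) choose 2)"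
  using assms
  by (simp add: rho_eq_rho_from lam_abcd_def rho_from_append rho_from_replicate real_choose_two
      of_nat_diff field_simps)

theorem mainTheorem14:
  fixes a b c d n :: nat
  assumes "1 \<le> c" "c < a" "d < b" "a + b + c + d = n"
  shows "real (num_syt (lam_abcd a b c d)) =
           fact n / (fact a * fact b * fact c * fact d) *
           (real a * real c * (real a - real c) * (real b - real d)) /
           ((real a + real b) * (real a + real d) * (real b + real c) * (real c + real d)) \<and>
         rho (lam_abcd a b c d) =
           real (a choose 2) - real ((b + 1) choose 2) + real (c choose 2) - real ((d + 1) choose 2)"
  using num_syt_lam_abcd[OF assms(1-3)] rho_lam_abcd[OF assms(3)] assms(4)
  by (simp add: syt_formula_def multinomial4_def syt_ratio_def)

end
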